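(* Let $G = K_m \otimes K_n$ with $m \geq 3$ and $n \geq 2m-1$. Then $\dim(G) = n-1$.
   Context: $K_r$ is the complete graph on $r$ vertices. The tensor product $G\otimes H$ has vertex set $V(G)\times V(H)$, with $(u,v)$ adjacent to $(x,y)$ iff $ux\in E(G)$ and $vy\in E(H)$. For a connected graph and an ordered set $W=\{w_1,\dots,w_k\}$ of vertices, $r(v\mid W)=(d(v,w_1),\dots,d(v,w_k))$; $W$ is resolving if distinct vertices have distinct representations; $\dim(G)$ is the minimum size of a resolving set. *)

theory Defs
  imports Main
begin

definition is_walk :: "'a set \<Rightarrow> ('a \<Rightarrow> 'a \<Rightarrow> bool) \<Rightarrow> 'a list \<Rightarrow> bool" where
  "is_walk V E p \<longleftrightarrow> p \<noteq> [] \<and> set p \<subseteq> V \<and> (\<forall>i. Suc i < length p \<longrightarrow> E (p ! i) (p ! Suc i))"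

definition walk_betw :: "'a set \<Rightarrow> ('a \<Rightarrow> 'a \<Rightarrow> bool) \<Rightarrow> 'a \<Rightarrow> 'a \<Rightarrow> 'a list \<Rightarrow> bool" where
  "walk_betw V E u v p \<longleftrightarrow> is_walk V E p \<and> hd p = u \<and> last p = v"

definition connected_graph :: "'a set \<Rightarrow> ('a \<Rightarrow> 'a \<Rightarrow> bool) \<Rightarrow> bool" where
  "connected_graph V E \<longleftrightarrow> V \<noteq> {} \<and> (\<forall>u\<in>V. \<forall>v\<in>V. \<exists>p. walk_betw V E u v p)"

(* distance = number of edges of a shortest walk (meaningful in connected graphs) *)
definition gdist :: "'a set \<Rightarrow> ('a \<Rightarrow> 'a \<Rightarrow> bool) \<Rightarrow> 'a \<Rightarrow> 'a \<Rightarrow> nat" where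
  "gdist V E u v = (LEAST k. \<exists>p. walk_betw V E u v p \<and> length p = Suc k)"

definition resolving :: "'a set \<Rightarrow> ('a \<Rightarrow> 'a \<Rightarrow> bool) \<Rightarrow> 'a set \<Rightarrow> bool" where
  "resolving V E W \<longleftrightarrow> W \<subseteq> V \<and>
     (\<forall>x\<in>V. \<forall>y\<in>V. x \<noteq> y \<longrightarrow> (\<exists>w\<in>W. gdist V E x w \<noteq> gdist V E y w))"

definition metric_dim :: "'a set \<Rightarrow> ('a \<Rightarrow> 'a \<Rightarrow> bool) \<Rightarrow> nat" where
  "metric_dim V E = (LEAST k. \<exists>W. resolving V E W \<and> card W = k)"

definition K_verts :: "nat \<Rightarrow> nat set" where "K_verts r = {0..<r}"
definition K_adj :: "nat \<Rightarrow> nat \<Rightarrow> bool" where "K_adj x y \<longleftrightarrow> x \<noteq> y"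

definition tensor_verts :: "'a set \<Rightarrow> 'b set \<Rightarrow> ('a \<times> 'b) set" where
  "tensor_verts V1 V2 = V1 \<times> V2"
definition tensor_adj :: "('a \<Rightarrow> 'a \<Rightarrow> bool) \<Rightarrow> ('b \<Rightarrow> 'b \<Rightarrow> bool) \<Rightarrow> ('a \<times> 'b) \<Rightarrow> ('a \<times> 'b) \<Rightarrow> bool" where
  "tensor_adj E1 E2 p q \<longleftrightarrow> E1 (fst p) (fst q) \<and> E2 (snd p) (snd q)"

end

theory Submission
  imports Defs
begin

text \<open>For \<open>m, n \<ge> 3\<close>, two distinct vertices of \<open>K\<^sub>m \<otimes> K\<^sub>n\<close> are at distance 1 if they
  differ in both coordinates and at distance 2 otherwise, so a landmark \<open>w\<close> only detects whether
  a vertex shares its row or its column.  Two vertices of one row whose columns both avoid the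
  landmarks are therefore indistinguishable: a resolving set meets all but at most one column
  and has at least \<open>n - 1\<close> elements.  Conversely, one landmark in each of the first \<open>n - 1\<close>
  columns, arranged so that each of the first \<open>m - 1\<close> rows holds two of them (possible since
  \<open>n - 1 \<ge> 2(m - 1)\<close>), resolves the graph.\<close>

lemma walk_betw_length_1: "walk_betw V E u v p \<Longrightarrow> length p = 1 \<Longrightarrow> u = v"
  unfolding walk_betw_def by (cases p) auto

lemma walk_betw_length_2: "walk_betw V E u v p \<Longrightarrow> length p = 2 \<Longrightarrow> E u v"
proof -
  assume walk: "walk_betw V E u v p" and "length p = 2"
  then obtain x y where "p = [x, y]"
    by (auto simp: numeral_2_eq_2 length_Suc_conv)
  with walk show ?thesis
    unfolding walk_betw_def is_walk_def by force
qed

lemma gdist_diameter_2: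
  assumes "u \<in> V" "v \<in> V"
    and common_neighbour: "u \<noteq> v \<Longrightarrow> \<not> E u v \<Longrightarrow> \<exists>c\<in>V. E u c \<and> E c v"
  shows "gdist V E u v = (if u = v then 0 else if E u v then 1 else 2)"
  unfolding gdist_def
proof (rule Least_equality)
  show "\<exists>p. walk_betw V E u v p \<and> length p = Suc (if u = v then 0 else if E u v then 1 else 2)"
  proof (cases "u = v \<or> E u v")
    case True
    with assms show ?thesis
      by (intro exI[of _ "if u = v then [u] else [u, v]"])
        (auto simp: walk_betw_def is_walk_def nth_Cons split: nat.splits)
  next
    case False
    then obtain c where "c \<in> V" "E u c" "E c v"
      using common_neighbour by blast
    with False assms show ?thesis
      by (intro exI[of _ "[u, c, v]"])
        (auto simp: walk_betw_def is_walk_def nth_Cons split: nat.splits)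
  qed
next
  fix k assume "\<exists>p. walk_betw V E u v p \<and> length p = Suc k"
  then obtain p where walk: "walk_betw V E u v p" and length: "length p = Suc k" by blast
  have "u = v" if "k = 0"
    using walk_betw_length_1[OF walk] length that by simp
  moreover have "E u v" if "k = 1"
    using walk_betw_length_2[OF walk] length that by simp
  ultimately show "(if u = v then 0 else if E u v then 1 else 2) \<le> k"
    by (cases "k = 0"; cases "k = 1") simp_all
qed

lemma metric_dim_eqI:
  assumes "resolving V E W" "card W = k" "\<And>W'. resolving V E W' \<Longrightarrow> k \<le> card W'"
  shows "metric_dim V E = k"
  unfolding metric_dim_def by (rule Least_equality) (use assms in auto)

lemma ex_less_avoiding_two: "3 \<le> k \<Longrightarrow> \<exists>c::nat. c < k \<and> c \<noteq> a \<and> c \<noteq> b"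
proof -
  assume "3 \<le> k"
  moreover have "\<exists>c\<in>{0, 1, 2::nat}. c \<noteq> a \<and> c \<noteq> b" by auto
  ultimately show ?thesis by force
qed

lemma mem_tensor_K_verts: "x \<in> tensor_verts (K_verts m) (K_verts n) \<longleftrightarrow> fst x < m \<and> snd x < n"
  by (cases x) (simp add: tensor_verts_def K_verts_def)

lemma tensor_K_adj_iff: "tensor_adj K_adj K_adj x y \<longleftrightarrow> fst x \<noteq> fst y \<and> snd x \<noteq> snd y"
  by (simp add: tensor_adj_def K_adj_def)

definition tensor_K_dist :: "nat \<times> nat \<Rightarrow> nat \<times> nat \<Rightarrow> nat" where
  "tensor_K_dist x w = (if x = w then 0 else if fst x \<noteq> fst w \<and> snd x \<noteq> snd w then 1 else 2)"

lemma gdist_tensor_K: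
  assumes "3 \<le> m" "3 \<le> n"
    and "x \<in> tensor_verts (K_verts m) (K_verts n)" "w \<in> tensor_verts (K_verts m) (K_verts n)"
  shows "gdist (tensor_verts (K_verts m) (K_verts n)) (tensor_adj K_adj K_adj) x w = tensor_K_dist x w"
proof -
  obtain a where "a < m" "a \<noteq> fst x" "a \<noteq> fst w"
    using ex_less_avoiding_two[OF assms(1)] by blast
  moreover obtain b where "b < n" "b \<noteq> snd x" "b \<noteq> snd w"
    using ex_less_avoiding_two[OF assms(2)] by blast
  ultimately have "\<exists>c\<in>tensor_verts (K_verts m) (K_verts n).
      tensor_adj K_adj K_adj x c \<and> tensor_adj K_adj K_adj c w"
    by (intro bexI[of _ "(a, b)"]) (auto simp: mem_tensor_K_verts tensor_K_adj_iff)
  then show ?thesis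
    using gdist_diameter_2[OF assms(3,4)] by (simp add: tensor_K_adj_iff tensor_K_dist_def)
qed

lemma resolving_tensor_K_card_ge:
  assumes "3 \<le> m" "3 \<le> n"
    and res: "resolving (tensor_verts (K_verts m) (K_verts n)) (tensor_adj K_adj K_adj) W"
  shows "n - 1 \<le> card W"
proof -
  let ?V = "tensor_verts (K_verts m) (K_verts n)"
  have W_sub: "W \<subseteq> ?V"
    using res by (simp add: resolving_def)
  then have "finite W"
    by (rule finite_subset) (simp add: tensor_verts_def K_verts_def)
  have free_column_unique: "b = b'"
    if "b \<in> {..<n} - snd ` W" "b' \<in> {..<n} - snd ` W" for b b'
  proof (rule ccontr)
    assume "b \<noteq> b'"
    have in_V: "(0, b) \<in> ?V" "(0, b') \<in> ?V"
      using that assms(1) by (auto simp: mem_tensor_K_verts)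
    then obtain w where "w \<in> W" and
      differ: "gdist ?V (tensor_adj K_adj K_adj) (0, b) w \<noteq> gdist ?V (tensor_adj K_adj K_adj) (0, b') w"
      using res \<open>b \<noteq> b'\<close> unfolding resolving_def by blast
    have "w \<in> ?V"
      using W_sub \<open>w \<in> W\<close> by blast
    moreover have "snd w \<noteq> b" "snd w \<noteq> b'"
      using that \<open>w \<in> W\<close> by force+
    ultimately show False
      using differ by (simp add: gdist_tensor_K[OF assms(1,2)] in_V tensor_K_dist_def prod_eq_iff)
  qed
  have "n - card (snd ` W) \<le> card ({..<n} - snd ` W)"
    using diff_card_le_card_Diff[of "snd ` W" "{..<n}"] \<open>finite W\<close> by simp
  moreover have "card (snd ` W) \<le> card W"
    using \<open>finite W\<close> by (rule card_image_le)
  ultimately show ?thesis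
    using free_column_unique card_le_Suc0_iff_eq[of "{..<n} - snd ` W"] by simp
qed

definition staircase_set :: "nat \<Rightarrow> nat \<Rightarrow> (nat \<times> nat) set" where
  "staircase_set m n = (\<lambda>j. (min (j div 2) (m - 1), j)) ` {..<n - 1}"

lemma mem_staircase_set: "(a, j) \<in> staircase_set m n \<longleftrightarrow> j < n - 1 \<and> a = min (j div 2) (m - 1)"
  unfolding staircase_set_def by auto

lemma card_staircase_set: "card (staircase_set m n) = n - 1"
  unfolding staircase_set_def by (subst card_image) (auto simp: inj_on_def)

lemma staircase_set_two_per_row:
  assumes "2 * m - 1 \<le> n" "r < m - 1"
  shows "\<exists>j. j \<noteq> c \<and> (r, j) \<in> staircase_set m n"
proof -
  have "(r, 2 * r) \<in> staircase_set m n" "(r, 2 * r + 1) \<in> staircase_set m n"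
    using assms by (auto simp: mem_staircase_set)
  then show ?thesis
    by (metis n_not_Suc_n Suc_eq_plus1)
qed

lemma staircase_set_separates:
  assumes "2 * m - 1 \<le> n"
    and V: "x \<in> tensor_verts (K_verts m) (K_verts n)" "y \<in> tensor_verts (K_verts m) (K_verts n)"
    and "x \<noteq> y"
  shows "\<exists>w\<in>staircase_set m n. tensor_K_dist x w \<noteq> tensor_K_dist y w"
proof -
  let ?W = "staircase_set m n"
  have same_row: "\<exists>w\<in>?W. tensor_K_dist x w \<noteq> tensor_K_dist y w"
    if "x \<notin> ?W" "y \<notin> ?W" "fst x = fst y"
  proof -
    have "snd x \<noteq> snd y"
      using \<open>x \<noteq> y\<close> \<open>fst x = fst y\<close> by (simp add: prod_eq_iff)
    then have "snd x < n - 1 \<or> snd y < n - 1"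
      using V by (auto simp: mem_tensor_K_verts)
    then obtain j where "j < n - 1" and j: "j = snd x \<or> j = snd y" by blast
    then have "(min (j div 2) (m - 1), j) \<in> ?W"
      by (simp add: mem_staircase_set)
    with \<open>fst x = fst y\<close> \<open>snd x \<noteq> snd y\<close> j that(1,2) show ?thesis
      by (intro bexI[of _ "(min (j div 2) (m - 1), j)"]) (auto simp: tensor_K_dist_def prod_eq_iff)
  qed
  have different_rows: "\<exists>w\<in>?W. tensor_K_dist x w \<noteq> tensor_K_dist y w"
    if "fst x \<noteq> fst y" "fst x < m - 1" for x y
  proof -
    obtain j where "j \<noteq> snd y" "(fst x, j) \<in> ?W"
      using staircase_set_two_per_row[OF assms(1) \<open>fst x < m - 1\<close>] by blast
    with \<open>fst x \<noteq> fst y\<close> show ?thesis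
      by (intro bexI[of _ "(fst x, j)"]) (auto simp: tensor_K_dist_def prod_eq_iff)
  qed
  show ?thesis
  proof (cases "x \<in> ?W \<or> y \<in> ?W")
    case True
    with \<open>x \<noteq> y\<close> show ?thesis by (auto simp: tensor_K_dist_def)
  next
    case False
    have "fst x = fst y \<or> fst x < m - 1 \<or> fst y < m - 1"
      using V by (auto simp: mem_tensor_K_verts)
    then show ?thesis
      using same_row False different_rows[of x y] different_rows[of y x] by metis
  qed
qed

lemma resolving_staircase_set:
  assumes "3 \<le> m" "2 * m - 1 \<le> n"
  shows "resolving (tensor_verts (K_verts m) (K_verts n)) (tensor_adj K_adj K_adj) (staircase_set m n)"
  unfolding resolving_def
proof (intro conjI ballI impI)
  let ?V = "tensor_verts (K_verts m) (K_verts n)" and ?W = "staircase_set m n"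
  show W_sub: "?W \<subseteq> ?V"
    using assms by (auto simp: staircase_set_def mem_tensor_K_verts)
  fix x y assume "x \<in> ?V" "y \<in> ?V" "x \<noteq> y"
  then obtain w where "w \<in> ?W" "tensor_K_dist x w \<noteq> tensor_K_dist y w"
    using staircase_set_separates[OF assms(2)] by blast
  moreover have "w \<in> ?V" "3 \<le> n"
    using W_sub \<open>w \<in> ?W\<close> assms by auto
  ultimately show "\<exists>w\<in>?W. gdist ?V (tensor_adj K_adj K_adj) x w \<noteq> gdist ?V (tensor_adj K_adj K_adj) y w"
    using \<open>x \<in> ?V\<close> \<open>y \<in> ?V\<close> by (metis gdist_tensor_K[OF \<open>3 \<le> m\<close>])
qed

theorem proposition3p3:
  fixes m n :: nat
  assumes "m \<ge> 3" and "n \<ge> 2 * m - 1"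
  shows "metric_dim (tensor_verts (K_verts m) (K_verts n)) (tensor_adj K_adj K_adj) = n - 1"
proof (rule metric_dim_eqI)
  show "resolving (tensor_verts (K_verts m) (K_verts n)) (tensor_adj K_adj K_adj) (staircase_set m n)"
    using assms by (rule resolving_staircase_set)
  show "card (staircase_set m n) = n - 1"
    by (rule card_staircase_set)
  have "3 \<le> n"
    using assms by linarith
  then show "n - 1 \<le> card W'"
    if "resolving (tensor_verts (K_verts m) (K_verts n)) (tensor_adj K_adj K_adj) W'" for W'
    using resolving_tensor_K_card_ge[OF assms(1)] that by blast
qed

end
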